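(* For all real $x\ge4$, $H(x)<\dfrac{2\log(x)}{1+\frac{6}{\pi^2x}}$.
   Context: $H(x)=\int_0^1\frac{t^x-1}{t-1}\,dt$ for real $x\ge1$; it satisfies $H(n)=1+\frac12+\cdots+\frac1n$ for $n\in\mathbb{N}$ and $H(x)=\psi(x+1)+\gamma$ with $\psi=\Gamma'/\Gamma$ the digamma function. *)

theory Defs
  imports "HOL-Analysis.Analysis"
begin

definition H :: "real \<Rightarrow> real" where
  "H x = integral {0..1} (\<lambda>t. (t powr x - 1) / (t - 1))"

end

theory Submission
  imports Defs "HOL-Analysis.Harmonic_Numbers"
begin

text \<open>
  For \<open>0 \<le> t \<le> 1\<close> the integrand \<open>(t powr x - 1) / (t - 1)\<close> increases with \<open>x\<close>,
  so \<open>H x\<close> is bounded by the harmonic number \<open>harm \<lceil>x\<rceil> \<le> ln \<lceil>x\<rceil> + 1 < ln x + 1/x + 1\<close>.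
  For \<open>x \<ge> 5\<close> this is already below \<open>2 ln x / (1 + 6/(\<pi>\<^sup>2 x))\<close>, using \<open>ln 5 > 1.58\<close>
  and \<open>6/\<pi>\<^sup>2 < 0.6081\<close>; on \<open>[4, 5]\<close> the cruder bound \<open>H x \<le> harm 5 = 137/60\<close> together
  with \<open>ln 4 \<ge> 4/3\<close> suffices.
\<close>

lemma harm_has_integral:
  assumes "n > 0"
  shows "((\<lambda>t::real. (t powr real n - 1) / (t - 1)) has_integral harm n) {0..1}"
proof -
  have "((\<lambda>t::real. \<Sum>k<n. t powr real k) has_integral harm n) {0..1}"
    unfolding harm_altdef
    by (intro has_integral_sum finite_lessThan)
       (use has_integral_powr_from_0[of "real _" 1] in \<open>simp add: inverse_eq_divide add.commute\<close>)
  then show ?thesis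
  proof (rule has_integral_spike[rotated 2])
    show "negligible {0, 1::real}" by simp
    fix t :: real assume "t \<in> {0..1} - {0, 1}"
    then have "0 < t" "t \<noteq> 1" by auto
    then show "(t powr real n - 1) / (t - 1) = (\<Sum>k<n. t powr real k)"
      using geometric_sum[of t n] by (simp add: powr_realpow)
  qed
qed

lemma H_le_harm:
  assumes "x \<le> real n" "n > 0"
  shows "H x \<le> harm n"
proof (cases "(\<lambda>t. (t powr x - 1) / (t - 1)) integrable_on {0..1}")
  case True
  have "(t powr x - 1) / (t - 1) \<le> (t powr real n - 1) / (t - 1)" if "t \<in> {0..1}" for t :: real
  proof (cases "t = 1")
    case False
    with that have "t < 1" by auto
    moreover have "t powr real n \<le> t powr x"
      using that assms by (intro powr_mono') auto
    ultimately show ?thesis by (intro divide_right_mono_neg) auto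
  qed simp
  then show ?thesis
    unfolding H_def by (rule has_integral_le[OF integrable_integral[OF True] harm_has_integral[OF assms(2)]])
next
  case False
  then show ?thesis unfolding H_def by (simp add: not_integrable_integral harm_nonneg)
qed

lemma harm_le_ln_add_one: "n > 0 \<Longrightarrow> harm n \<le> ln (real n) + 1"
  using euler_mascheroni_sequence_decreasing[of 1 n] by (simp add: harm_altdef)

lemma H_less_ln_add_inverse:
  assumes "x \<ge> 1"
  shows "H x < ln x + 1 / x + 1"
proof -
  define n where "n = nat \<lceil>x\<rceil>"
  have n: "x \<le> real n" "real n < x + 1" "n > 0"
    using assms unfolding n_def by linarith+
  have "H x \<le> harm n" using H_le_harm n by simp
  also have "\<dots> \<le> ln (real n) + 1" using harm_le_ln_add_one n by simp
  also have "\<dots> \<le> ln (x + 1) + 1" using n by simp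
  also have "\<dots> < ln x + 1 / x + 1" using ln_diff_le_inverse[OF assms] by simp
  finally show ?thesis .
qed

lemma ln_5_gt: "79/50 < ln (5::real)"
  using ln_approx_bounds[of 5 3] by (simp add: eval_nat_numeral)

lemma ln_4_ge: "4/3 \<le> ln (4::real)"
  using ln2_ge_two_thirds ln_realpow[of 2 2] by simp

lemma six_div_pi_squared_le: "6 / pi\<^sup>2 \<le> 0.6081"
proof -
  have "3.141592653588 * 3.141592653588 \<le> pi * pi"
    using pi_approx(1) by (intro mult_mono) auto
  then show ?thesis by (simp add: power2_eq_square field_simps)
qed

lemma harm_5_mult_lt_two_ln:
  fixes x c :: real
  assumes "4 \<le> x" "0 \<le> c" "c \<le> 0.6081"
  shows "137/60 * (1 + c / x) < 2 * ln x"
proof -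
  have "c / x \<le> 0.6081 / 4" using assms by (intro frac_le) auto
  then have "137/60 * (1 + c / x) < 8/3" by simp
  moreover have "ln 4 \<le> ln x" using assms by simp
  ultimately show ?thesis using ln_4_ge by linarith
qed

lemma ln_add_inverse_mult_lt_two_ln:
  fixes x c :: real
  assumes "5 \<le> x" "0 \<le> c" "c \<le> 0.6081"
  shows "(ln x + 1 / x + 1) * (1 + c / x) < 2 * ln x"
proof -
  define a b where "a = 1 / x" and "b = c / x"
  have "b \<le> 0.6081 / 5" using assms unfolding b_def by (intro frac_le) auto
  moreover have "0 \<le> a" "a \<le> 1/5" "0 \<le> b" using assms unfolding a_def b_def by auto
  ultimately have ab: "0 \<le> a" "a \<le> 1/5" "0 \<le> b" "b \<le> 1/8" by auto
  have "ln 5 \<le> ln x" using assms by simp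
  with ln_5_gt have L: "79/50 \<le> ln x" by linarith
  have "79/50 * (1 - b) \<le> ln x * (1 - b)" using L ab by (intro mult_right_mono) simp_all
  moreover have "(a + 1) * (1 + b) \<le> 6/5 * (1 + b)" using ab by (intro mult_right_mono) simp_all
  ultimately have "(ln x + a + 1) * (1 + b) < 2 * ln x" using ab unfolding ring_distribs by linarith
  then show ?thesis unfolding a_def b_def .
qed

theorem mainTheorem13:
  fixes x :: real
  assumes "x \<ge> 4"
  shows "H x < 2 * ln x / (1 + 6 / (pi\<^sup>2 * x))"
proof -
  define c where "c = 6 / pi\<^sup>2"
  have c: "0 < c" "c \<le> 0.6081" using six_div_pi_squared_le by (auto simp: c_def)
  have denom: "0 < 1 + c / x" using c assms by (simp add: add_pos_nonneg)
  have "H x * (1 + c / x) < 2 * ln x"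
  proof (cases "x \<le> 5")
    case True
    have "H x \<le> harm 5" using H_le_harm[of x 5] True by simp
    also have "\<dots> = 137/60" by (simp add: harm_altdef eval_nat_numeral)
    finally have "H x * (1 + c / x) \<le> 137/60 * (1 + c / x)"
      using denom by (intro mult_right_mono) auto
    with harm_5_mult_lt_two_ln[of x c] assms c show ?thesis by linarith
  next
    case False
    then have "H x * (1 + c / x) < (ln x + 1 / x + 1) * (1 + c / x)"
      using H_less_ln_add_inverse denom by (intro mult_strict_right_mono) auto
    with ln_add_inverse_mult_lt_two_ln[of x c] False c show ?thesis by linarith
  qed
  with denom show ?thesis unfolding c_def by (simp add: pos_less_divide_eq)
qed

end
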